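(* For the torsion-free cotorsion-free connections of the discrete torus model with frame group $\mathbb{Z}_4$ and universal calculus (parametrised by $a,b$ as in the context), the Ricci scalar is \[R=\partial^1b+\partial^2a+(\bar\partial^2\Theta_1)R_1b+(\bar\partial^1\Theta_2)R_2a-2bR_1b-2aR_2a.\]
   Context: Discrete torus model: $\Sigma=\mathbb{Z}_2\times\mathbb{Z}_2$, $x\to y$ iff $y-x\in\{(1,0),(0,1)\}$; diagonal zweibein $e_{1,x,x+(1,0)}=\Theta_1(x)^{-1}$, $e_{2,x,x+(0,1)}=\Theta_2(x)^{-1}$, $\Theta_a$ nowhere-vanishing with $\Theta_1R_1\Theta_2=\Theta_2R_2\Theta_1$; $R_1f(x)=f(x+(1,0))$, $R_2f(x)=f(x+(0,1))$, $\bar\partial^a=R_a-\mathrm{id}$, $\partial^a=\Theta_a\bar\partial^a$; $e_af=R_a(f)e_a$, $\mathrm{d}f=\sum_a(\partial^af)e_a$; two-forms $e_1\wedge e_2=-e_2\wedge e_1$, $e_a\wedge e_a=0$, $\mathrm{d}e_1=(\bar\partial^1\Theta_2)e_1\wedge e_2$, $\mathrm{d}e_2=-(\bar\partial^2\Theta_1)e_1\wedge e_2$; lift $\iota(e_1\wedge e_2)=\frac12(e_1\otimes e_2-e_2\otimes e_1)$; metric $\eta=e_1\otimes e_1+e_2\otimes e_2$. Frame group $\mathbb{Z}_4$ acting by quarter rotations ($\bar1$: $e_1\mapsto e_2,e_2\mapsto-e_1$), universal calculus $\mathcal C=\{\bar1,\bar2,\bar3\}$, $f^i=i-\bar0$.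 The torsion-free ($\mathrm{d}e_a+\sum_iA_i\wedge f^i\triangleright e_a=0$) and cotorsion-free ($\mathrm{d}e_a+\sum_i(f^{-i}\triangleright e_a)\wedge A_i=0$) connections are $A_{\bar1}=\alpha e_1+\beta e_2$, $A_{\bar3}=\gamma e_1+\delta e_2$, $A_{\bar2}=\frac12(-\alpha+\beta-\gamma-\delta-\bar\partial^2\Theta_1)e_1+\frac12(-\alpha-\beta+\gamma-\delta-\bar\partial^1\Theta_2)e_2$ with $a=\gamma-\alpha$, $b=\beta-\delta$ satisfying $(R_1+R_2)a=(R_1+R_2)b=0$. Curvature $F_i=\mathrm{d}A_i+\sum_{j+k=i}A_j\wedge A_k-(A_i\wedge A+A\wedge A_i)$, $A=\sum_jA_j$ ($j,k\in\mathcal C$). With $\iota(F_i)=\sum\iota(F_i)^{ab}e_a\otimes e_b$, $\mathrm{Ricci}=\sum_{i,a,b}\iota(F_i)^{ab}e_b\otimes f^i\triangleright e_a=\sum R_{ab}e_a\otimes e_b$, and the Ricci scalar is $R=R_{11}+R_{22}$. *)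

theory Defs
  imports Main
begin

text \<open>Discrete torus model on Sigma = Z2 x Z2, points encoded as bool x bool
  (True = 1, False = 0).  Scalars range over an arbitrary field of characteristic 0.
  Indices a in {1,2} label the zweibein e_1, e_2; frame group Z4 elements are
  represented by nat 0..3 (addition mod 4); the universal calculus is C = {1,2,3}.\<close>

type_synonym 'a fn = "bool \<times> bool \<Rightarrow> 'a"

text \<open>One-forms sum_a u_a e_a (left coefficients u_a, a = 1,2).\<close>
type_synonym 'a oneform = "nat \<Rightarrow> 'a fn"

text \<open>Two-forms h e_1 /\ e_2, represented by the left coefficient h.\<close>
type_synonym 'a twoform = "'a fn"

text \<open>R_1 f(x) = f(x+(1,0)), R_2 f(x) = f(x+(0,1)).\<close>
definition shift :: "nat \<Rightarrow> 'a fn \<Rightarrow> 'a fn" where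
  "shift a f = (\<lambda>(x, y). if a = 1 then f (\<not> x, y) else f (x, \<not> y))"

definition dbar :: "nat \<Rightarrow> ('a::ab_group_add) fn \<Rightarrow> 'a fn" where
  "dbar a f = (\<lambda>p. shift a f p - f p)"

definition del :: "(nat \<Rightarrow> ('a::ring) fn) \<Rightarrow> nat \<Rightarrow> 'a fn \<Rightarrow> 'a fn" where
  "del \<Theta> a f = (\<lambda>p. \<Theta> a p * dbar a f p)"

definition oneform :: "'a fn \<Rightarrow> 'a fn \<Rightarrow> 'a oneform" where
  "oneform f g = (\<lambda>c. if c = 1 then f else g)"

definition basis :: "nat \<Rightarrow> ('a::zero_neq_one) oneform" where
  "basis a = (\<lambda>c p. if c = a then 1 else 0)"

text \<open>e_a /\ e_b = eps a b (e_1 /\ e_2).\<close>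
definition eps :: "nat \<Rightarrow> nat \<Rightarrow> 'a::ring_1" where
  "eps a b = (if a = 1 \<and> b = 2 then 1 else if a = 2 \<and> b = 1 then -1 else 0)"

text \<open>(u_a e_a) /\ (v_b e_b) = u_a R_a(v_b) e_a /\ e_b, using e_a f = R_a(f) e_a.\<close>
definition wedge :: "('a::ring_1) oneform \<Rightarrow> 'a oneform \<Rightarrow> 'a twoform" where
  "wedge u v = (\<lambda>p. \<Sum>a\<in>{1,2}. \<Sum>b\<in>{1,2}. eps a b * u a p * shift a (v b) p)"

definition dfun :: "(nat \<Rightarrow> ('a::ring) fn) \<Rightarrow> 'a fn \<Rightarrow> 'a oneform" where
  "dfun \<Theta> f = (\<lambda>a. del \<Theta> a f)"

definition de :: "(nat \<Rightarrow> ('a::ring) fn) \<Rightarrow> nat \<Rightarrow> 'a twoform" where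
  "de \<Theta> a = (if a = 1 then dbar 1 (\<Theta> 2) else (\<lambda>p. - dbar 2 (\<Theta> 1) p))"

definition dform :: "(nat \<Rightarrow> ('a::ring_1) fn) \<Rightarrow> 'a oneform \<Rightarrow> 'a twoform" where
  "dform \<Theta> u = (\<lambda>p. \<Sum>a\<in>{1,2}. wedge (dfun \<Theta> (u a)) (basis a) p + u a p * de \<Theta> a p)"

text \<open>Quarter rotation (generator 1 of Z4): e_1 |-> e_2, e_2 |-> -e_1, on coefficient vectors.\<close>
definition qrot :: "int \<times> int \<Rightarrow> int \<times> int" where
  "qrot = (\<lambda>(x, y). (- y, x))"

definition vec :: "nat \<Rightarrow> int \<times> int" where
  "vec a = (if a = 1 then (1, 0) else (0, 1))"

definition comp :: "nat \<Rightarrow> int \<times> int \<Rightarrow> int" where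
  "comp c v = (if c = 1 then fst v else snd v)"

text \<open>f^i |> e_a = (i - 0) |> e_a = i |> e_a - e_a, a constant-coefficient one-form.\<close>
definition frameact :: "nat \<Rightarrow> nat \<Rightarrow> ('a::ring_1) oneform" where
  "frameact i a = (\<lambda>c p. of_int (comp c ((qrot ^^ i) (vec a)) - comp c (vec a)))"

definition calcC :: "nat set" where
  "calcC = {1, 2, 3}"

definition Asum :: "(nat \<Rightarrow> ('a::ring_1) oneform) \<Rightarrow> 'a oneform" where
  "Asum A = (\<lambda>c p. \<Sum>j\<in>calcC. A j c p)"

definition curv :: "(nat \<Rightarrow> ('a::ring_1) fn) \<Rightarrow> (nat \<Rightarrow> 'a oneform) \<Rightarrow> nat \<Rightarrow> 'a twoform" where
  "curv \<Theta> A i = (\<lambda>p. dform \<Theta> (A i) p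
      + (\<Sum>j\<in>calcC. \<Sum>k\<in>calcC. if (j + k) mod 4 = i then wedge (A j) (A k) p else 0)
      - (wedge (A i) (Asum A) p + wedge (Asum A) (A i) p))"

text \<open>iota(h e_1/\e_2) = h/2 (e_1 (x) e_2 - e_2 (x) e_1); coefficient of e_a (x) e_b.\<close>
definition iota :: "('a::field_char_0) twoform \<Rightarrow> nat \<Rightarrow> nat \<Rightarrow> 'a fn" where
  "iota h a b = (\<lambda>p. eps a b * h p / 2)"

text \<open>Ricci = sum_{i,a,b} iota(F_i)^{ab} e_b (x) (f^i |> e_a) = sum R_{bc} e_b (x) e_c;
  since f^i |> e_a has constant coefficients, R_{bc} = sum_{i,a} iota(F_i)^{ab} (f^i |> e_a)_c.\<close>
definition ricci :: "(nat \<Rightarrow> ('a::field_char_0) fn) \<Rightarrow> (nat \<Rightarrow> 'a oneform) \<Rightarrow> nat \<Rightarrow> nat \<Rightarrow> 'a fn" where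
  "ricci \<Theta> A b c = (\<lambda>p. \<Sum>i\<in>calcC. \<Sum>a\<in>{1,2}. iota (curv \<Theta> A i) a b p * frameact i a c p)"

definition ricci_scalar :: "(nat \<Rightarrow> ('a::field_char_0) fn) \<Rightarrow> (nat \<Rightarrow> 'a oneform) \<Rightarrow> 'a fn" where
  "ricci_scalar \<Theta> A = (\<lambda>p. ricci \<Theta> A 1 1 p + ricci \<Theta> A 2 2 p)"

end

theory Submission
  imports Defs
begin

text \<open>Contracting with the frame action leaves only the two quarter turns, so
  R = F_1 - F_3.  Writing D = A_3 - A_1 = a e_1 - b e_2 and N = A_1 + 2 A_2 + A_3, the cross
  terms of the two curvatures combine to F_1 - F_3 = D /\ N + N /\ D - dD, and the free
  parameters \<alpha>, \<beta>, \<gamma>, \<delta> drop out of N.  Expanding in coordinates, the surplus terms cancel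
  because each shift R_a is an involution of Z_2 x Z_2, so that R_a dbar^a = - dbar^a, and
  because (R_1 + R_2) a = (R_1 + R_2) b = 0.\<close>

lemma frameact_values:
  "frameact 1 2 1 p = -1" "frameact 1 1 2 p = 1"
  "frameact 2 2 1 p = 0" "frameact 2 1 2 p = 0"
  "frameact 3 2 1 p = 1" "frameact 3 1 2 p = -1"
  by (simp_all add: frameact_def qrot_def vec_def comp_def numeral_eq_Suc)

lemma eps_values: "eps 1 1 = 0" "eps 1 2 = 1" "eps 2 1 = -1" "eps 2 2 = 0"
  by (simp_all add: eps_def)

lemma sum_pair: "(\<Sum>a\<in>{1, 2::nat}. f a) = f 1 + f 2"
  by simp

lemma sum_calcC: "(\<Sum>j\<in>calcC. f j) = f 1 + f 2 + f 3"
  by (simp add: calcC_def add.assoc)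

lemma ricci_scalar_eq_curv_diff:
  "ricci_scalar \<Theta> A p = curv \<Theta> A 1 p - curv \<Theta> A 3 p"
  unfolding ricci_scalar_def ricci_def sum_calcC iota_def sum_pair
  by (simp only: eps_values frameact_values) (simp add: field_simps)

lemma wedge_coords: "wedge u v p = u 1 p * shift 1 (v 2) p - u 2 p * shift 2 (v 1) p"
  by (simp add: wedge_def eps_def)

lemma dform_coords:
  "dform \<Theta> u p = del \<Theta> 1 (u 2) p - del \<Theta> 2 (u 1) p
     + u 1 p * dbar 1 (\<Theta> 2) p - u 2 p * dbar 2 (\<Theta> 1) p"
  by (simp add: dform_def wedge_def eps_def dfun_def basis_def shift_def de_def)

lemma shift_dbar: "shift a (dbar a f) p = - dbar a f p"
  by (simp add: dbar_def shift_def split: prod.split)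

lemma shift_diff: "shift a (\<lambda>q. f q - g q) p = shift a f p - shift a g p"
  by (simp add: shift_def split: prod.split)

lemma shift_uminus: "shift a (\<lambda>q. - f q) p = - shift a f p"
  by (simp add: shift_def split: prod.split)

lemma del_uminus: "del \<Theta> a (\<lambda>q. - f q) p = - del \<Theta> a f p"
  by (simp add: del_def dbar_def shift_uminus algebra_simps)

lemma curv_1_minus_curv_3:
  fixes A :: "nat \<Rightarrow> ('a::comm_ring_1) oneform"
  defines "D \<equiv> \<lambda>c q. A 3 c q - A 1 c q"
    and "N \<equiv> \<lambda>c q. 2 * A 2 c q + A 1 c q + A 3 c q"
  shows "curv \<Theta> A 1 p - curv \<Theta> A 3 p = wedge D N p + wedge N D p - dform \<Theta> D p"
proof -
  obtain x y where p: "p = (x, y)" by force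
  show ?thesis
    unfolding curv_def sum_calcC Asum_def wedge_coords dform_coords D_def N_def p
    by (simp add: shift_def del_def dbar_def algebra_simps)
qed

lemma torus_curvature_identity:
  fixes \<Theta> :: "nat \<Rightarrow> ('a::comm_ring_1) fn"
  assumes a_cond: "\<forall>p. shift 1 a p + shift 2 a p = 0"
    and b_cond: "\<forall>p. shift 1 b p + shift 2 b p = 0"
  defines "D \<equiv> oneform a (\<lambda>p. - b p)"
    and "N \<equiv> oneform (\<lambda>p. b p - dbar 2 (\<Theta> 1) p) (\<lambda>p. a p - dbar 1 (\<Theta> 2) p)"
  shows "wedge D N p + wedge N D p - dform \<Theta> D p =
    del \<Theta> 1 b p + del \<Theta> 2 a p
       + dbar 2 (\<Theta> 1) p * shift 1 b p + dbar 1 (\<Theta> 2) p * shift 2 a p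
       - 2 * b p * shift 1 b p - 2 * a p * shift 2 a p"
proof -
  have "shift 1 a p = - shift 2 a p" "shift 1 b p = - shift 2 b p"
    using a_cond[rule_format, of p] b_cond[rule_format, of p]
    by (simp_all only: eq_neg_iff_add_eq_0)
  then show ?thesis
    unfolding D_def N_def wedge_coords dform_coords oneform_def
    by (simp add: shift_dbar shift_diff shift_uminus del_uminus algebra_simps)
qed

theorem proposition4p3:
  fixes \<Theta> :: "nat \<Rightarrow> ('a::field_char_0) fn"
    and \<alpha> \<beta> \<gamma> \<delta> a b :: "'a fn"
    and A :: "nat \<Rightarrow> 'a oneform"
  assumes nonvanish: "\<forall>i\<in>{1,2}. \<forall>p. \<Theta> i p \<noteq> 0"
    and compat: "\<forall>p. \<Theta> 1 p * shift 1 (\<Theta> 2) p = \<Theta> 2 p * shift 2 (\<Theta> 1) p"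
    and A1: "A 1 = oneform \<alpha> \<beta>"
    and A3: "A 3 = oneform \<gamma> \<delta>"
    and A2: "A 2 = oneform
        (\<lambda>p. (- \<alpha> p + \<beta> p - \<gamma> p - \<delta> p - dbar 2 (\<Theta> 1) p) / 2)
        (\<lambda>p. (- \<alpha> p - \<beta> p + \<gamma> p - \<delta> p - dbar 1 (\<Theta> 2) p) / 2)"
    and a_def: "a = (\<lambda>p. \<gamma> p - \<alpha> p)"
    and b_def: "b = (\<lambda>p. \<beta> p - \<delta> p)"
    and a_cond: "\<forall>p. shift 1 a p + shift 2 a p = 0"
    and b_cond: "\<forall>p. shift 1 b p + shift 2 b p = 0"
  shows "ricci_scalar \<Theta> A =
    (\<lambda>p. del \<Theta> 1 b p + del \<Theta> 2 a p
       + dbar 2 (\<Theta> 1) p * shift 1 b p + dbar 1 (\<Theta> 2) p * shift 2 a p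
       - 2 * b p * shift 1 b p - 2 * a p * shift 2 a p)"
proof -
  have D: "(\<lambda>c q. A 3 c q - A 1 c q) = oneform a (\<lambda>q. - b q)"
    unfolding A1 A3 a_def b_def oneform_def by (simp add: fun_eq_iff)
  have N: "(\<lambda>c q. 2 * A 2 c q + A 1 c q + A 3 c q) =
      oneform (\<lambda>q. b q - dbar 2 (\<Theta> 1) q) (\<lambda>q. a q - dbar 1 (\<Theta> 2) q)"
    unfolding A1 A2 A3 a_def b_def oneform_def by (simp add: fun_eq_iff field_simps)
  show ?thesis
    unfolding fun_eq_iff ricci_scalar_eq_curv_diff curv_1_minus_curv_3 D N
    by (intro allI torus_curvature_identity[OF a_cond b_cond])
qed

end
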